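(* The following two conditions are equivalent: (1) for each relevant pair $\langle m_1,m_2\rangle$ of a state $p\in Q^2$, $\nu(p)$ is a most general equalizer (mge) for $\langle m_1,m_2\rangle$; (2) for all states $p,q\in Q^2$ such that $\rho(p)=\langle m_1,m_2\rangle$ and $\rho(q)=\langle n_1,n_2\rangle$ are defined, and for each transition $\langle p,\langle u_1,u_2\rangle,q\rangle\in\Delta_2$, $\eta(m_1u_1,m_2u_2)$ is a mge of $\rho(q)$.
   Context: Let $\mathcal{M}=\langle M,\circ,e\rangle$ be a monoid. A tuple $\langle m_1,\dots,m_n\rangle\in M^n$ is equalizable if there is $\langle x_1,\dots,x_n\rangle\in M^n$ (an equalizer) with $m_1x_1=\dots=m_nx_n$; an equalizer $\langle x_1,\dots,x_n\rangle$ is a most general equalizer (mge) if every equalizer has the form $\langle x_1x,\dots,x_nx\rangle$ for some $x\in M$. $\mathcal{M}$ is an mge monoid if it has right cancellation ($ac=bc\Rightarrow a=b$) and every equalizable pair has an mge. Let $\eta:M^2\to M^2$ be a function that returns an mge $\eta(m,m')$ for each equalizable pair $\langle m,m'\rangle$. Let $\mathcal{T}=\langle \Sigma^*\times\mathcal{M},Q,I,F,\Delta\rangle$ be a trimmed (every state accessible and co-accessible) monoidal finite-state transducer with output in the mge monoid $\mathcal{M}$, where $\Delta\subseteq Q\times((\Sigma\cup\{\varepsilon\})\times M)\times Q$ and $\Delta^*$ is its generalized transition relation. Let $\mathcal{A}^2=\langle \mathcal{M}\times\mathcal{M},Q\times Q,I\times I,F\times F,\Delta_2\rangle$ be a squared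 output automaton for $\mathcal{T}$, i.e. $\Delta_2$ is finite and $\langle\langle p_1,p_2\rangle,\langle m,n\rangle,\langle q_1,q_2\rangle\rangle\in\Delta_2^*$ iff there is $u\in\Sigma^*$ with $\langle p_1,\langle u,m\rangle,q_1\rangle\in\Delta^*$ and $\langle p_2,\langle u,n\rangle,q_2\rangle\in\Delta^*$. For a state $\langle q_1,q_2\rangle$ lying on a successful path of $\mathcal{A}^2$, a pair $\langle m_1,m_2\rangle$ is a relevant pair for $\langle q_1,q_2\rangle$ if $\langle\langle i_1,i_2\rangle,\langle m_1,m_2\rangle,\langle q_1,q_2\rangle\rangle\in\Delta_2^*$ for some $\langle i_1,i_2\rangle\in I\times I$. Let $\langle\rho,\nu\rangle$ be a valuation of $\mathcal{A}^2$: $\rho,\nu:Q^2\to M^2$ are partial functions where $\rho(q)$ is some chosen relevant pair for $q$ if one exists (undefined otherwise), with $\rho(q)=\langle e,e\rangle$ for $q\in I^2$ having a relevant pair; and $\nu(q)=\langle e,e\rangle$ if $\rho(q)$ is defined and of the form $\langle m,m\rangle$, $\nu(q)=\eta(\rho(q))$ if $\rho(q)$ is defined and equalizable, and $\nu(q)$ undefined otherwise. *)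

theory Defs
  imports Main
begin

definition equalizer :: "'m::monoid_mult \<times> 'm \<Rightarrow> 'm \<times> 'm \<Rightarrow> bool" where
  "equalizer x m \<longleftrightarrow> fst m * fst x = snd m * snd x"

definition equalizable :: "'m::monoid_mult \<times> 'm \<Rightarrow> bool" where
  "equalizable m \<longleftrightarrow> (\<exists>x. equalizer x m)"

definition is_mge :: "'m::monoid_mult \<times> 'm \<Rightarrow> 'm \<times> 'm \<Rightarrow> bool" where
  "is_mge x m \<longleftrightarrow> equalizer x m \<and>
     (\<forall>y. equalizer y m \<longrightarrow> (\<exists>z. y = (fst x * z, snd x * z)))"

definition mge_monoid :: "'m::monoid_mult itself \<Rightarrow> bool" where
  "mge_monoid _ \<longleftrightarrow> (\<forall>a b c::'m. a * c = b * c \<longrightarrow> a = b) \<and>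
     (\<forall>m::'m \<times> 'm. equalizable m \<longrightarrow> (\<exists>x. is_mge x m))"

definition mge_fun :: "('m::monoid_mult \<times> 'm \<Rightarrow> ('m \<times> 'm) option) \<Rightarrow> bool" where
  "mge_fun \<eta> \<longleftrightarrow> (\<forall>m. (\<eta> m \<noteq> None \<longleftrightarrow> equalizable m) \<and>
                        (\<forall>x. \<eta> m = Some x \<longrightarrow> is_mge x m))"

definition opt_word :: "'a option \<Rightarrow> 'a list" where
  "opt_word a = (case a of None \<Rightarrow> [] | Some x \<Rightarrow> [x])"

inductive tstar :: "('q \<times> ('a option \<times> 'm::monoid_mult) \<times> 'q) set \<Rightarrow> 'q \<Rightarrow> 'a list \<times> 'm \<Rightarrow> 'q \<Rightarrow> bool"
  for \<Delta> where
  tstar_refl: "tstar \<Delta> q ([], 1) q"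
| tstar_step: "(p, (a, m), q) \<in> \<Delta> \<Longrightarrow> tstar \<Delta> q (w, n) r \<Longrightarrow> tstar \<Delta> p (opt_word a @ w, m * n) r"

definition trimmed_transducer ::
  "'q set \<Rightarrow> 'q set \<Rightarrow> 'q set \<Rightarrow> ('q \<times> ('a option \<times> 'm::monoid_mult) \<times> 'q) set \<Rightarrow> bool" where
  "trimmed_transducer Q I F \<Delta> \<longleftrightarrow> finite Q \<and> I \<subseteq> Q \<and> F \<subseteq> Q \<and> finite \<Delta> \<and>
     \<Delta> \<subseteq> Q \<times> UNIV \<times> Q \<and>
     (\<forall>q\<in>Q. (\<exists>i\<in>I. \<exists>l. tstar \<Delta> i l q) \<and> (\<exists>f\<in>F. \<exists>l. tstar \<Delta> q l f))"

inductive sstar :: "(('q \<times> 'q) \<times> ('m::monoid_mult \<times> 'm) \<times> ('q \<times> 'q)) set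
                    \<Rightarrow> 'q \<times> 'q \<Rightarrow> 'm \<times> 'm \<Rightarrow> 'q \<times> 'q \<Rightarrow> bool"
  for \<Delta>2 where
  sstar_refl: "sstar \<Delta>2 p (1, 1) p"
| sstar_step: "(p, (m1, m2), q) \<in> \<Delta>2 \<Longrightarrow> sstar \<Delta>2 q (n1, n2) r \<Longrightarrow> sstar \<Delta>2 p (m1 * n1, m2 * n2) r"

definition squared_output_automaton ::
  "'q set \<Rightarrow> ('q \<times> ('a option \<times> 'm::monoid_mult) \<times> 'q) set
   \<Rightarrow> (('q \<times> 'q) \<times> ('m \<times> 'm) \<times> ('q \<times> 'q)) set \<Rightarrow> bool" where
  "squared_output_automaton Q \<Delta> \<Delta>2 \<longleftrightarrow> finite \<Delta>2 \<and>
     \<Delta>2 \<subseteq> (Q \<times> Q) \<times> UNIV \<times> (Q \<times> Q) \<and>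
     (\<forall>p1\<in>Q. \<forall>p2\<in>Q. \<forall>q1\<in>Q. \<forall>q2\<in>Q. \<forall>m n.
        sstar \<Delta>2 (p1, p2) (m, n) (q1, q2) \<longleftrightarrow>
        (\<exists>u. tstar \<Delta> p1 (u, m) q1 \<and> tstar \<Delta> p2 (u, n) q2))"

definition on_successful_path ::
  "('q \<times> 'q) set \<Rightarrow> ('q \<times> 'q) set \<Rightarrow> (('q \<times> 'q) \<times> ('m::monoid_mult \<times> 'm) \<times> ('q \<times> 'q)) set
   \<Rightarrow> 'q \<times> 'q \<Rightarrow> bool" where
  "on_successful_path I2 F2 \<Delta>2 q \<longleftrightarrow>
     (\<exists>i\<in>I2. \<exists>f\<in>F2. \<exists>a b. sstar \<Delta>2 i a q \<and> sstar \<Delta>2 q b f)"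

definition relevant_pair ::
  "('q \<times> 'q) set \<Rightarrow> ('q \<times> 'q) set \<Rightarrow> (('q \<times> 'q) \<times> ('m::monoid_mult \<times> 'm) \<times> ('q \<times> 'q)) set
   \<Rightarrow> 'q \<times> 'q \<Rightarrow> 'm \<times> 'm \<Rightarrow> bool" where
  "relevant_pair I2 F2 \<Delta>2 q r \<longleftrightarrow>
     on_successful_path I2 F2 \<Delta>2 q \<and> (\<exists>i\<in>I2. sstar \<Delta>2 i r q)"

definition valuation_rho ::
  "'q set \<Rightarrow> ('q \<times> 'q) set \<Rightarrow> ('q \<times> 'q) set \<Rightarrow> (('q \<times> 'q) \<times> ('m::monoid_mult \<times> 'm) \<times> ('q \<times> 'q)) set
   \<Rightarrow> ('q \<times> 'q \<Rightarrow> ('m \<times> 'm) option) \<Rightarrow> bool" where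
  "valuation_rho Q I2 F2 \<Delta>2 \<rho> \<longleftrightarrow>
     (\<forall>q\<in>Q \<times> Q. (\<rho> q = None \<longleftrightarrow> \<not> (\<exists>r. relevant_pair I2 F2 \<Delta>2 q r)) \<and>
                (\<forall>r. \<rho> q = Some r \<longrightarrow> relevant_pair I2 F2 \<Delta>2 q r) \<and>
                (q \<in> I2 \<and> (\<exists>r. relevant_pair I2 F2 \<Delta>2 q r) \<longrightarrow> \<rho> q = Some (1, 1)))"

definition valuation_nu ::
  "('q \<times> 'q \<Rightarrow> ('m::monoid_mult \<times> 'm) option) \<Rightarrow> ('m \<times> 'm \<Rightarrow> ('m \<times> 'm) option)
   \<Rightarrow> 'q \<times> 'q \<Rightarrow> ('m \<times> 'm) option" where
  "valuation_nu \<rho> \<eta> q = (case \<rho> q of None \<Rightarrow> None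
      | Some (m, m') \<Rightarrow> if m = m' then Some (1, 1) else \<eta> (m, m'))"

end

theory Submission
  imports Defs
begin

text \<open>Whether x is an mge of r depends on r only through its set of equalizers. Condition (2)
  propagates along every transition the invariant that a relevant pair of a state has the same
  equalizers as the chosen pair rho of that state; then nu, an mge of rho, is an mge of every
  relevant pair. Conversely, extending the chosen pair of p along a transition to q gives a
  relevant pair of q, which by (1) shares the mge nu with rho q.\<close>

definition equalizers :: "'m::monoid_mult \<times> 'm \<Rightarrow> ('m \<times> 'm) set" where
  "equalizers r = {y. equalizer y r}"

lemma is_mge_iff_equalizers:
  "is_mge x r \<longleftrightarrow> equalizers r = range (\<lambda>z. (fst x * z, snd x * z))"
proof
  assume mge: "is_mge x r"
  show "equalizers r = range (\<lambda>z. (fst x * z, snd x * z))"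
  proof
    show "equalizers r \<subseteq> range (\<lambda>z. (fst x * z, snd x * z))"
      using mge unfolding equalizers_def is_mge_def by (auto simp: image_iff)
    show "range (\<lambda>z. (fst x * z, snd x * z)) \<subseteq> equalizers r"
      using mge by (auto simp: equalizers_def is_mge_def equalizer_def mult.assoc[symmetric])
  qed
next
  assume eq: "equalizers r = range (\<lambda>z. (fst x * z, snd x * z))"
  have "(fst x * 1, snd x * 1) \<in> equalizers r"
    unfolding eq by (rule rangeI)
  then have "equalizer x r"
    by (simp add: equalizers_def)
  moreover have "\<exists>z. y = (fst x * z, snd x * z)" if "equalizer y r" for y
    using that eq by (auto simp: equalizers_def image_iff)
  ultimately show "is_mge x r"
    by (simp add: is_mge_def)
qed

lemma is_mge_imp_equalizable: "is_mge x r \<Longrightarrow> equalizable r"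
  unfolding is_mge_def equalizable_def by blast

lemma equalizers_eq_if_common_mge:
  "is_mge x r \<Longrightarrow> is_mge x r' \<Longrightarrow> equalizers r = equalizers r'"
  by (simp add: is_mge_iff_equalizers)

lemma is_mge_cong_equalizers:
  "equalizers r = equalizers r' \<Longrightarrow> is_mge x r \<longleftrightarrow> is_mge x r'"
  by (simp add: is_mge_iff_equalizers)

lemma equalizers_mult_right_cong:
  assumes "equalizers r = equalizers r'"
  shows "equalizers (fst r * u1, snd r * u2) = equalizers (fst r' * u1, snd r' * u2)"
proof -
  have "y \<in> equalizers (fst s * u1, snd s * u2) \<longleftrightarrow> (u1 * fst y, u2 * snd y) \<in> equalizers s"
    for s y :: "'a \<times> 'a"
    by (simp add: equalizers_def equalizer_def mult.assoc)
  with assms show ?thesis by blast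
qed

text \<open>Left cancellation is not assumed: it follows from right cancellation and the existence
  of an mge for the diagonal pair (m, m).\<close>
lemma mge_monoid_left_cancel:
  assumes "mge_monoid TYPE('m::monoid_mult)" and "(m::'m) * a = m * b"
  shows "a = b"
proof -
  have right_cancel: "\<And>a b c::'m. a * c = b * c \<Longrightarrow> a = b"
    using assms(1) unfolding mge_monoid_def by blast
  have "equalizable (m, m)"
    by (auto simp: equalizable_def equalizer_def)
  then obtain x where x: "is_mge x (m, m)"
    using assms(1) unfolding mge_monoid_def by blast
  have "equalizer (1, 1) (m, m)"
    by (simp add: equalizer_def)
  with x obtain z where "(1, 1) = (fst x * z, snd x * z)"
    unfolding is_mge_def by blast
  then have fst_eq_snd: "fst x = snd x"
    using right_cancel[of "fst x" z "snd x"] by simp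
  have "equalizer (a, b) (m, m)"
    using assms(2) by (simp add: equalizer_def)
  with x obtain w where "(a, b) = (fst x * w, snd x * w)"
    unfolding is_mge_def by blast
  with fst_eq_snd show ?thesis by simp
qed

lemma is_mge_one_diagonal:
  assumes "mge_monoid TYPE('m::monoid_mult)"
  shows "is_mge (1, 1) (m::'m, m)"
  unfolding is_mge_def equalizer_def
  by (auto dest: mge_monoid_left_cancel[OF assms] intro: exI[of _ "snd _"])

lemma mge_fun_equalizable_imp_mge:
  "mge_fun \<eta> \<Longrightarrow> equalizable m \<Longrightarrow> \<exists>x. \<eta> m = Some x \<and> is_mge x m"
  unfolding mge_fun_def by blast

lemma valuation_nu_is_mge:
  assumes "mge_monoid TYPE('m::monoid_mult)" and "mge_fun \<eta>"
    and "\<rho> p = Some (m::'m \<times> 'm)" and "equalizable m"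
  shows "\<exists>x. valuation_nu \<rho> \<eta> p = Some x \<and> is_mge x m"
proof (cases "fst m = snd m")
  case True
  then show ?thesis
    using assms(3) is_mge_one_diagonal[OF assms(1), of "fst m"]
    by (cases m) (simp add: valuation_nu_def)
next
  case False
  obtain x where "\<eta> m = Some x" and "is_mge x m"
    using mge_fun_equalizable_imp_mge[OF assms(2,4)] by blast
  with False assms(3) show ?thesis
    by (cases m) (simp add: valuation_nu_def)
qed

lemma sstar_snoc:
  "sstar D i r p \<Longrightarrow> (p, (u1, u2), q) \<in> D \<Longrightarrow> sstar D i (fst r * u1, snd r * u2) q"
proof (induction rule: sstar.induct)
  case (sstar_refl p)
  then show ?case
    using sstar.sstar_step[OF _ sstar.sstar_refl, of p u1 u2 q D] by simp
next
  case (sstar_step p m1 m2 q n1 n2 r)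
  then show ?case
    using sstar.sstar_step[of p m1 m2 q D "n1 * u1" "n2 * u2"] by (simp add: mult.assoc)
qed

lemma sstar_snoc_induct[consumes 1, case_names refl snoc]:
  assumes "sstar D p r q"
    and refl: "P (1, 1) p"
    and snoc: "\<And>r q u1 u2 t. sstar D p r q \<Longrightarrow> P r q \<Longrightarrow> (q, (u1, u2), t) \<in> D \<Longrightarrow>
                 P (fst r * u1, snd r * u2) t"
  shows "P r q"
proof -
  have "sstar D p (fst r * fst n, snd r * snd n) s \<and> P (fst r * fst n, snd r * snd n) s"
    if "sstar D q n s" and "sstar D p r q" and "P r q" for q n s r
    using that
  proof (induction arbitrary: r rule: sstar.induct)
    case (sstar_refl q)
    then show ?case by simp
  next
    case (sstar_step q m1 m2 q' n1 n2 s)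
    have "sstar D p (fst r * m1, snd r * m2) q'" and "P (fst r * m1, snd r * m2) q'"
      using sstar_step.prems sstar_step.hyps(1) by (auto intro: sstar_snoc snoc)
    then show ?case
      using sstar_step.IH[of "(fst r * m1, snd r * m2)"] by (simp add: mult.assoc)
  qed
  from this[OF assms(1) sstar.sstar_refl refl] show ?thesis by simp
qed

lemma on_successful_path_backward:
  assumes "i \<in> I2" and "sstar D i r q" and "(q, (u1, u2), t) \<in> D"
    and "on_successful_path I2 F2 D t"
  shows "on_successful_path I2 F2 D q"
proof -
  obtain f b where "f \<in> F2" and "sstar D t b f"
    using assms(4) by (auto simp: on_successful_path_def)
  with assms(1-3) show ?thesis
    unfolding on_successful_path_def
    using sstar.sstar_step[OF assms(3), of "fst b" "snd b" f] by (metis prod.collapse)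
qed

lemma relevant_pair_snoc:
  assumes "relevant_pair I2 F2 D p r" and "on_successful_path I2 F2 D q"
    and "(p, (u1, u2), q) \<in> D"
  shows "relevant_pair I2 F2 D q (fst r * u1, snd r * u2)"
  using assms by (auto simp: relevant_pair_def intro: sstar_snoc)

lemma relevant_pair_equalizers_eq_valuation:
  assumes rho: "valuation_rho Q I2 F2 D \<rho>"
    and I2: "I2 \<subseteq> Q \<times> Q" and D: "D \<subseteq> (Q \<times> Q) \<times> UNIV \<times> (Q \<times> Q)"
    and eta: "mge_fun \<eta>"
    and transition: "\<And>p q m1 m2 n1 n2 u1 u2. p \<in> Q \<times> Q \<Longrightarrow> q \<in> Q \<times> Q \<Longrightarrow>
        \<rho> p = Some (m1, m2) \<Longrightarrow> \<rho> q = Some (n1, n2) \<Longrightarrow> (p, (u1, u2), q) \<in> D \<Longrightarrow>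
        \<exists>x. \<eta> (m1 * u1, m2 * u2) = Some x \<and> is_mge x (n1, n2)"
    and "relevant_pair I2 F2 D s r"
  shows "\<exists>m. \<rho> s = Some m \<and> equalizable m \<and> equalizers r = equalizers m"
proof -
  have rho_none_iff: "\<And>q. q \<in> Q \<times> Q \<Longrightarrow> \<rho> q = None \<longleftrightarrow> \<not> (\<exists>r. relevant_pair I2 F2 D q r)"
    using rho unfolding valuation_rho_def by blast
  have rho_initial: "\<And>q. q \<in> Q \<times> Q \<Longrightarrow> q \<in> I2 \<Longrightarrow> (\<exists>r. relevant_pair I2 F2 D q r) \<Longrightarrow>
      \<rho> q = Some (1, 1)"
    using rho unfolding valuation_rho_def by blast
  obtain i where i: "i \<in> I2" and path: "sstar D i r s" and "on_successful_path I2 F2 D s"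
    using assms(6) by (auto simp: relevant_pair_def)
  from path this(3) show ?thesis
  proof (induction rule: sstar_snoc_induct)
    case refl
    with i have "relevant_pair I2 F2 D i (1, 1)"
      unfolding relevant_pair_def using sstar.sstar_refl by blast
    with i I2 have "\<rho> i = Some (1, 1)"
      using rho_initial by blast
    then show ?case
      by (auto simp: equalizable_def equalizer_def)
  next
    case (snoc r q u1 u2 t)
    have q: "q \<in> Q \<times> Q" and t: "t \<in> Q \<times> Q"
      using snoc.hyps(2) D by auto
    have "on_successful_path I2 F2 D q"
      using on_successful_path_backward[OF i snoc.hyps snoc.prems] .
    then obtain m where m: "\<rho> q = Some m" and r_m: "equalizers r = equalizers m"
      using snoc.IH by blast
    have "relevant_pair I2 F2 D t (fst r * u1, snd r * u2)"
      using i sstar_snoc[OF snoc.hyps] snoc.prems unfolding relevant_pair_def by blast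
    with t have "\<rho> t \<noteq> None"
      using rho_none_iff by blast
    then obtain n where n: "\<rho> t = Some n"
      by blast
    obtain x where x: "\<eta> (fst m * u1, snd m * u2) = Some x" and x_n: "is_mge x n"
      using transition[OF q t, of "fst m" "snd m" "fst n" "snd n" u1 u2] m n snoc.hyps(2)
      by auto
    have x_m: "is_mge x (fst m * u1, snd m * u2)"
      using eta x unfolding mge_fun_def by blast
    have "equalizers (fst r * u1, snd r * u2) = equalizers (fst m * u1, snd m * u2)"
      using equalizers_mult_right_cong[OF r_m] .
    also have "\<dots> = equalizers n"
      using equalizers_eq_if_common_mge[OF x_m x_n] .
    finally show ?case
      using n is_mge_imp_equalizable[OF x_n] by blast
  qed
qed

theorem proposition4:
  fixes Q :: "'q set" and I F :: "'q set"
    and \<Delta> :: "('q \<times> ('a option \<times> 'm::monoid_mult) \<times> 'q) set"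
    and \<Delta>2 :: "(('q \<times> 'q) \<times> ('m \<times> 'm) \<times> ('q \<times> 'q)) set"
    and \<eta> :: "'m \<times> 'm \<Rightarrow> ('m \<times> 'm) option"
    and \<rho> :: "'q \<times> 'q \<Rightarrow> ('m \<times> 'm) option"
  assumes "mge_monoid TYPE('m)"
    and "mge_fun \<eta>"
    and "trimmed_transducer Q I F \<Delta>"
    and "squared_output_automaton Q \<Delta> \<Delta>2"
    and "valuation_rho Q (I \<times> I) (F \<times> F) \<Delta>2 \<rho>"
  shows "(\<forall>p\<in>Q \<times> Q. \<forall>r. relevant_pair (I \<times> I) (F \<times> F) \<Delta>2 p r \<longrightarrow>
            (\<exists>x. valuation_nu \<rho> \<eta> p = Some x \<and> is_mge x r))
     \<longleftrightarrow>
         (\<forall>p\<in>Q \<times> Q. \<forall>q\<in>Q \<times> Q. \<forall>m1 m2 n1 n2 u1 u2.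
            \<rho> p = Some (m1, m2) \<longrightarrow> \<rho> q = Some (n1, n2) \<longrightarrow> (p, (u1, u2), q) \<in> \<Delta>2 \<longrightarrow>
            (\<exists>x. \<eta> (m1 * u1, m2 * u2) = Some x \<and> is_mge x (n1, n2)))"
    (is "?nu_mge \<longleftrightarrow> ?transition")
proof
  assume ?nu_mge
  show ?transition
  proof (intro ballI allI impI)
    fix p q m1 m2 n1 n2 u1 u2
    assume p: "p \<in> Q \<times> Q" and q: "q \<in> Q \<times> Q" and "\<rho> p = Some (m1, m2)"
      and "\<rho> q = Some (n1, n2)" and transition: "(p, (u1, u2), q) \<in> \<Delta>2"
    then have p_m: "relevant_pair (I \<times> I) (F \<times> F) \<Delta>2 p (m1, m2)"
      and q_n: "relevant_pair (I \<times> I) (F \<times> F) \<Delta>2 q (n1, n2)"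
      using assms(5) unfolding valuation_rho_def by blast+
    then have q_mu: "relevant_pair (I \<times> I) (F \<times> F) \<Delta>2 q (m1 * u1, m2 * u2)"
      using relevant_pair_snoc[OF p_m _ transition] by (simp add: relevant_pair_def)
    from \<open>?nu_mge\<close> q q_n obtain x where nu: "valuation_nu \<rho> \<eta> q = Some x"
      and x_n: "is_mge x (n1, n2)"
      by blast
    from \<open>?nu_mge\<close> q q_mu have x_mu: "is_mge x (m1 * u1, m2 * u2)"
      using nu by fastforce
    have "equalizers (m1 * u1, m2 * u2) = equalizers (n1, n2)"
      using equalizers_eq_if_common_mge[OF x_mu x_n] .
    moreover have "equalizable (m1 * u1, m2 * u2)"
      using is_mge_imp_equalizable[OF x_mu] .
    ultimately show "\<exists>x. \<eta> (m1 * u1, m2 * u2) = Some x \<and> is_mge x (n1, n2)"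
      using mge_fun_equalizable_imp_mge[OF assms(2)] is_mge_cong_equalizers by blast
  qed
next
  assume ?transition
  have "I \<times> I \<subseteq> Q \<times> Q" and "\<Delta>2 \<subseteq> (Q \<times> Q) \<times> UNIV \<times> (Q \<times> Q)"
    using assms(3,4) by (auto simp: trimmed_transducer_def squared_output_automaton_def)
  note invariant = relevant_pair_equalizers_eq_valuation[OF assms(5) this assms(2)]
  show ?nu_mge
  proof (intro ballI allI impI)
    fix p r assume "relevant_pair (I \<times> I) (F \<times> F) \<Delta>2 p r"
    then have "\<exists>m. \<rho> p = Some m \<and> equalizable m \<and> equalizers r = equalizers m"
      using \<open>?transition\<close> by (intro invariant) auto
    then obtain m where "\<rho> p = Some m" "equalizable m" and "equalizers r = equalizers m"
      by blast
    then show "\<exists>x. valuation_nu \<rho> \<eta> p = Some x \<and> is_mge x r"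
      using valuation_nu_is_mge[OF assms(1,2)] is_mge_cong_equalizers by blast
  qed
qed

end
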